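(* Let $A$ be a locally uniformly convex normed vector space over $\mathbb C$ and give $A^\vee$ the dual norm. Then on $\mathrm{Max}\,A$ the lower Vietoris topology coincides with the topology generated by the sets $\{V\in\mathrm{Max}\,A: d(\phi,F(V))>r\}$, $\phi\in A^\vee$, $r>0$.
   Context: $\mathrm{Max}\,A$ is the set of closed subspaces of $A$; its lower Vietoris topology is generated by $\{V:V\cap U\ne\emptyset\}$, $U\subset A$ open. $F(V)=\{\phi\in A^\vee:\phi|_V=0\}$ and $d$ is the distance in the dual norm. $A$ is locally uniformly convex if for all $a\in A$ and sequences $(a_n)$ in $A$, $\lim(2\|a\|^2+2\|a_n\|^2-\|a+a_n\|^2)=0$ implies $\lim\|a-a_n\|=0$. *)

theory Defs
  imports "HOL-Analysis.Analysis"
begin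

definition complex_normed_structure :: "(complex \<Rightarrow> 'a::real_normed_vector \<Rightarrow> 'a) \<Rightarrow> bool" where
  "complex_normed_structure smul \<longleftrightarrow>
     (\<forall>r x. smul (complex_of_real r) x = r *\<^sub>R x) \<and>
     (\<forall>a b x. smul (a + b) x = smul a x + smul b x) \<and>
     (\<forall>a x y. smul a (x + y) = smul a x + smul a y) \<and>
     (\<forall>a b x. smul (a * b) x = smul a (smul b x)) \<and>
     (\<forall>a x. norm (smul a x) = cmod a * norm x)"

definition loc_unif_convex :: "'a::real_normed_vector itself \<Rightarrow> bool" where
  "loc_unif_convex _ \<longleftrightarrow>
     (\<forall>(a::'a) an. (\<lambda>n. 2 * (norm a)\<^sup>2 + 2 * (norm (an n))\<^sup>2 - (norm (a + an n))\<^sup>2) \<longlonglongrightarrow> 0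
        \<longrightarrow> (\<lambda>n. norm (a - an n)) \<longlonglongrightarrow> 0)"

definition cdual :: "(complex \<Rightarrow> 'a::real_normed_vector \<Rightarrow> 'a) \<Rightarrow> ('a \<Rightarrow> complex) set" where
  "cdual smul = {\<phi>. (\<forall>x y. \<phi> (x + y) = \<phi> x + \<phi> y) \<and> (\<forall>c x. \<phi> (smul c x) = c * \<phi> x)
                   \<and> (\<exists>K. \<forall>x. cmod (\<phi> x) \<le> K * norm x)}"

definition MaxA :: "(complex \<Rightarrow> 'a::real_normed_vector \<Rightarrow> 'a) \<Rightarrow> 'a set set" where
  "MaxA smul = {V. closed V \<and> 0 \<in> V \<and> (\<forall>x\<in>V. \<forall>y\<in>V. x + y \<in> V) \<and> (\<forall>c. \<forall>x\<in>V. smul c x \<in> V)}"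

definition annih :: "(complex \<Rightarrow> 'a::real_normed_vector \<Rightarrow> 'a) \<Rightarrow> 'a set \<Rightarrow> ('a \<Rightarrow> complex) set" where
  "annih smul V = {\<psi> \<in> cdual smul. \<forall>v\<in>V. \<psi> v = 0}"

definition dual_dist :: "('a::real_normed_vector \<Rightarrow> complex) \<Rightarrow> ('a \<Rightarrow> complex) set \<Rightarrow> real" where
  "dual_dist \<phi> S = Inf {onorm (\<lambda>x. \<phi> x - \<psi> x) | \<psi>. \<psi> \<in> S}"

definition topology_on_generated :: "'b set \<Rightarrow> 'b set set \<Rightarrow> 'b topology" where
  "topology_on_generated X S = topology_generated_by (insert X S)"

end

(* By Hahn-Banach, d(phi, F(V)) is the norm of the restriction of phi to V, so
   d(phi, F(V)) > r says exactly that V meets the open cone {x. r * norm x < |phi x|}: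
   every set of the second subbase is a lower Vietoris set.
   Conversely, let U be open and v a nonzero vector of V in U (if 0 is in U, every
   subspace meets U). Take a norming functional phi of v. Local uniform convexity says
   that vectors u with norm u = norm v and Re (phi u) close to norm v are close to v,
   hence in U; rotating and rescaling, every vector of a thin cone around v has a
   complex multiple in U. As subspaces are closed under complex scaling, every V meeting
   that cone meets U, so the lower Vietoris set of U is a union of sets of the second
   subbase. *)

theory Submission
  imports Defs
begin

section \<open>Hahn--Banach for sublinear functionals\<close>

definition sublinear :: "('a::real_vector \<Rightarrow> real) \<Rightarrow> bool" where
  "sublinear p \<longleftrightarrow> (\<forall>x y. p (x + y) \<le> p x + p y) \<and> (\<forall>t x. 0 < t \<longrightarrow> p (t *\<^sub>R x) = t * p x)"

lemma sublinear_zero: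
  assumes "sublinear p" shows "p 0 = 0"
proof -
  have "p ((2::real) *\<^sub>R 0) = 2 * p 0" using assms unfolding sublinear_def by (meson zero_less_numeral)
  then show ?thesis by simp
qed

text \<open>Partial linear extensions of \<open>f\<close> dominated by \<open>p\<close> are represented by their graphs, linear
  subspaces of \<open>'a \<times> real\<close>; that such a graph is single-valued follows from domination.\<close>

definition dominated_extension_graph ::
    "('a::real_vector \<Rightarrow> real) \<Rightarrow> 'a set \<Rightarrow> ('a \<Rightarrow> real) \<Rightarrow> ('a \<times> real) set \<Rightarrow> bool" where
  "dominated_extension_graph p V f G \<longleftrightarrow>
     subspace G \<and> (\<forall>(x, a) \<in> G. a \<le> p x) \<and> (\<forall>x\<in>V. (x, f x) \<in> G)"

lemma dominated_extension_graph_unique: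
  assumes p: "sublinear p" and G: "dominated_extension_graph p V f G"
    and "(x, a) \<in> G" "(x, b) \<in> G"
  shows "a = b"
proof -
  have "(x, a) - (x, b) \<in> G" "(x, b) - (x, a) \<in> G"
    using G assms(3,4) unfolding dominated_extension_graph_def by (metis subspace_diff)+
  then have "(0, a - b) \<in> G" "(0, b - a) \<in> G" by simp_all
  then have "a - b \<le> 0" "b - a \<le> 0"
    using G sublinear_zero[OF p] unfolding dominated_extension_graph_def by fastforce+
  then show ?thesis by simp
qed

lemma sublinear_extension_interval:
  assumes p: "sublinear p" and sub: "subspace G" and dom: "\<forall>(x, a) \<in> G. a \<le> p x"
  shows "\<exists>a\<^sub>0. (\<forall>(y, b) \<in> G. b - p (y - x\<^sub>0) \<le> a\<^sub>0) \<and> (\<forall>(z, e) \<in> G. a\<^sub>0 \<le> p (z + x\<^sub>0) - e)"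
proof -
  have separated: "b - p (y - x\<^sub>0) \<le> p (z + x\<^sub>0) - e" if "(y, b) \<in> G" "(z, e) \<in> G" for y b z e
  proof -
    have "(y + z, b + e) \<in> G" using subspace_add[OF sub that] by simp
    then have "b + e \<le> p ((y - x\<^sub>0) + (z + x\<^sub>0))" using dom by auto
    also have "\<dots> \<le> p (y - x\<^sub>0) + p (z + x\<^sub>0)" using p unfolding sublinear_def by blast
    finally show ?thesis by simp
  qed
  have zero: "(0, 0) \<in> G"
    using subspace_0[OF sub] by (simp add: zero_prod_def)
  define L where "L = {b - p (y - x\<^sub>0) | y b. (y, b) \<in> G}"
  have "bdd_above L"
    unfolding L_def bdd_above_def using separated[OF _ zero] by auto
  then have "\<forall>(y, b) \<in> G. b - p (y - x\<^sub>0) \<le> Sup L"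
    by (auto intro: cSup_upper simp: L_def)
  moreover have "\<forall>(z, e) \<in> G. Sup L \<le> p (z + x\<^sub>0) - e"
    using zero separated by (auto intro!: cSup_least simp: L_def)
  ultimately show ?thesis by blast
qed

lemma sublinear_extension_value:
  assumes p: "sublinear p" and sub: "subspace G" and dom: "\<forall>(x, a) \<in> G. a \<le> p x"
  shows "\<exists>a\<^sub>0. \<forall>(y, b) \<in> G. \<forall>t. b + t * a\<^sub>0 \<le> p (y + t *\<^sub>R x\<^sub>0)"
proof -
  obtain a\<^sub>0 where lower: "\<And>y b. (y, b) \<in> G \<Longrightarrow> b - p (y - x\<^sub>0) \<le> a\<^sub>0"
    and upper: "\<And>z e. (z, e) \<in> G \<Longrightarrow> a\<^sub>0 \<le> p (z + x\<^sub>0) - e"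
    using sublinear_extension_interval[OF assms] by blast
  have p_scale: "\<And>t x. 0 < t \<Longrightarrow> p (t *\<^sub>R x) = t * p x"
    using p unfolding sublinear_def by auto
  have G_scale: "(c *\<^sub>R y, c * b) \<in> G" if "(y, b) \<in> G" for c y b
    using subspace_scale[OF sub that, of c] by simp
  have "b + t * a\<^sub>0 \<le> p (y + t *\<^sub>R x\<^sub>0)" if yb: "(y, b) \<in> G" for y b t
  proof (cases t "0::real" rule: linorder_cases)
    case less
    have "b / (- t) - p ((1 / (- t)) *\<^sub>R y - x\<^sub>0) \<le> a\<^sub>0"
      using lower[OF G_scale[OF yb, of "1 / (- t)"]] by simp
    then have "b - (- t) * p ((1 / (- t)) *\<^sub>R y - x\<^sub>0) \<le> - t * a\<^sub>0"
      using less by (simp add: field_simps)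
    also have "(- t) * p ((1 / (- t)) *\<^sub>R y - x\<^sub>0) = p (y + t *\<^sub>R x\<^sub>0)"
      using p_scale[of "- t" "(1 / (- t)) *\<^sub>R y - x\<^sub>0"] less by (simp add: algebra_simps)
    finally show ?thesis by simp
  next
    case equal
    then show ?thesis using dom yb by auto
  next
    case greater
    have "a\<^sub>0 \<le> p ((1 / t) *\<^sub>R y + x\<^sub>0) - b / t"
      using upper[OF G_scale[OF yb, of "1 / t"]] by simp
    then have "t * a\<^sub>0 \<le> t * p ((1 / t) *\<^sub>R y + x\<^sub>0) - b"
      using greater by (simp add: field_simps)
    also have "t * p ((1 / t) *\<^sub>R y + x\<^sub>0) = p (y + t *\<^sub>R x\<^sub>0)"
      using p_scale[of t "(1 / t) *\<^sub>R y + x\<^sub>0"] greater by (simp add: algebra_simps)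
    finally show ?thesis by simp
  qed
  then show ?thesis by blast
qed

lemma dominated_extension_graph_extend:
  assumes p: "sublinear p" and G: "dominated_extension_graph p V f G"
    and x\<^sub>0: "\<forall>a. (x\<^sub>0, a) \<notin> G"
  shows "\<exists>G'. dominated_extension_graph p V f G' \<and> G \<subset> G'"
proof -
  have sub: "subspace G" and dom: "\<forall>(x, a) \<in> G. a \<le> p x"
    using G unfolding dominated_extension_graph_def by auto
  obtain a\<^sub>0 where a\<^sub>0: "\<forall>(y, b) \<in> G. \<forall>t. b + t * a\<^sub>0 \<le> p (y + t *\<^sub>R x\<^sub>0)"
    using sublinear_extension_value[OF p sub dom] by blast
  define G' where "G' = {u + w | u w. u \<in> G \<and> w \<in> span {(x\<^sub>0, a\<^sub>0)}}"
  have "subspace G'"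
    unfolding G'_def by (rule subspace_sums[OF sub subspace_span])
  moreover have "\<forall>(x, a) \<in> G'. a \<le> p x"
    using a\<^sub>0 unfolding G'_def span_singleton by auto
  moreover have "G \<subseteq> G'"
  proof
    fix u assume "u \<in> G"
    then show "u \<in> G'"
      unfolding G'_def using span_zero by (intro CollectI exI[of _ u] exI[of _ 0]) simp
  qed
  moreover have "(x\<^sub>0, a\<^sub>0) \<in> G'"
    unfolding G'_def using subspace_0[OF sub]
    by (intro CollectI exI[of _ 0] exI[of _ "(x\<^sub>0, a\<^sub>0)"] conjI) (auto intro: span_base)
  moreover have "(x\<^sub>0, a\<^sub>0) \<notin> G" using x\<^sub>0 by blast
  ultimately show ?thesis
    using G unfolding dominated_extension_graph_def by blast
qed

lemma dominated_extension_graph_initial: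
  assumes V: "subspace V"
    and f_add: "\<forall>x\<in>V. \<forall>y\<in>V. f (x + y) = f x + f y"
    and f_scale: "\<forall>r. \<forall>x\<in>V. f (r *\<^sub>R x) = r * f x"
    and f_dom: "\<forall>x\<in>V. f x \<le> p x"
  shows "dominated_extension_graph p V f ((\<lambda>x. (x, f x)) ` V)"
proof -
  have "subspace ((\<lambda>x. (x, f x)) ` V)"
  proof (rule subspaceI)
    show "0 \<in> (\<lambda>x. (x, f x)) ` V"
      using subspace_0[OF V] f_scale[rule_format, of 0 0] by (force simp: zero_prod_def)
    show "u + w \<in> (\<lambda>x. (x, f x)) ` V" if "u \<in> (\<lambda>x. (x, f x)) ` V" "w \<in> (\<lambda>x. (x, f x)) ` V" for u w
      using that V f_add by (auto intro: rev_image_eqI subspace_add)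
    show "c *\<^sub>R u \<in> (\<lambda>x. (x, f x)) ` V" if "u \<in> (\<lambda>x. (x, f x)) ` V" for c u
      using that V f_scale by (auto intro: rev_image_eqI subspace_scale)
  qed
  then show ?thesis
    unfolding dominated_extension_graph_def using f_dom by auto
qed

lemma dominated_extension_graph_chain_Union:
  assumes "C \<noteq> {}" and chain: "subset.chain (Collect (dominated_extension_graph p V f)) C"
  shows "dominated_extension_graph p V f (\<Union>C)"
proof -
  obtain G\<^sub>0 where "G\<^sub>0 \<in> C" using \<open>C \<noteq> {}\<close> by blast
  have C_sub: "\<And>G. G \<in> C \<Longrightarrow> subspace G"
    and C_dom: "\<And>G x a. G \<in> C \<Longrightarrow> (x, a) \<in> G \<Longrightarrow> a \<le> p x"
    and C_f: "\<And>G x. G \<in> C \<Longrightarrow> x \<in> V \<Longrightarrow> (x, f x) \<in> G"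
    using chain unfolding subset.chain_def dominated_extension_graph_def by auto
  have "subspace (\<Union>C)"
  proof (rule subspaceI)
    show "0 \<in> \<Union>C"
      using subspace_0[OF C_sub[OF \<open>G\<^sub>0 \<in> C\<close>]] \<open>G\<^sub>0 \<in> C\<close> by (rule UnionI[rotated])
    show "u + w \<in> \<Union>C" if uw: "u \<in> \<Union>C" "w \<in> \<Union>C" for u w
    proof -
      obtain G where G: "G \<in> C" "u \<in> G" "w \<in> G"
        using uw chain unfolding subset.chain_def by blast
      show ?thesis using subspace_add[OF C_sub[OF G(1)] G(2,3)] G(1) by (rule UnionI[rotated])
    qed
    show "c *\<^sub>R u \<in> \<Union>C" if u: "u \<in> \<Union>C" for c u
    proof -
      obtain G where G: "G \<in> C" "u \<in> G" using u by blast
      show ?thesis using subspace_scale[OF C_sub[OF G(1)] G(2)] G(1) by (rule UnionI[rotated])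
    qed
  qed
  moreover have "\<forall>(x, a) \<in> \<Union>C. a \<le> p x" using C_dom by fast
  moreover have "\<forall>x\<in>V. (x, f x) \<in> \<Union>C" using C_f \<open>G\<^sub>0 \<in> C\<close> by fast
  ultimately show ?thesis
    unfolding dominated_extension_graph_def by blast
qed

lemma dominated_extension_graph_total_imp_linear:
  assumes p: "sublinear p" and G: "dominated_extension_graph p V f G"
    and total: "\<And>x. \<exists>a. (x, a) \<in> G"
  shows "\<exists>g. linear g \<and> (\<forall>x\<in>V. g x = f x) \<and> (\<forall>x. g x \<le> p x)"
proof -
  define g where "g x = (SOME a. (x, a) \<in> G)" for x
  have g_graph: "(x, g x) \<in> G" for x
    unfolding g_def using total by (rule someI_ex)
  have g_eq: "g x = a" if "(x, a) \<in> G" for x a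
    using dominated_extension_graph_unique[OF p G g_graph that] .
  have sub: "subspace G" and G_dom: "\<And>x a. (x, a) \<in> G \<Longrightarrow> a \<le> p x"
    and G_f: "\<And>x. x \<in> V \<Longrightarrow> (x, f x) \<in> G"
    using G unfolding dominated_extension_graph_def by auto
  have "linear g"
  proof (rule linearI)
    show "g (x + y) = g x + g y" for x y
      using g_eq subspace_add[OF sub g_graph g_graph] by simp
    show "g (r *\<^sub>R x) = r *\<^sub>R g x" for r x
      using g_eq subspace_scale[OF sub g_graph] by simp
  qed
  moreover have "\<forall>x\<in>V. g x = f x" using g_eq G_f by blast
  moreover have "\<forall>x. g x \<le> p x" using G_dom g_graph by blast
  ultimately show ?thesis by blast
qed

theorem Hahn_Banach_sublinear:
  fixes p f :: "'a::real_vector \<Rightarrow> real"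
  assumes p: "sublinear p" and V: "subspace V"
    and f_add: "\<forall>x\<in>V. \<forall>y\<in>V. f (x + y) = f x + f y"
    and f_scale: "\<forall>r. \<forall>x\<in>V. f (r *\<^sub>R x) = r * f x"
    and f_dom: "\<forall>x\<in>V. f x \<le> p x"
  shows "\<exists>g. linear g \<and> (\<forall>x\<in>V. g x = f x) \<and> (\<forall>x. g x \<le> p x)"
proof -
  define A where "A = Collect (dominated_extension_graph p V f)"
  have "A \<noteq> {}"
    using dominated_extension_graph_initial[OF V f_add f_scale f_dom] unfolding A_def by blast
  then have "\<exists>G\<in>A. \<forall>G'\<in>A. G \<subseteq> G' \<longrightarrow> G' = G"
    unfolding A_def by (rule subset_Zorn_nonempty) (simp add: dominated_extension_graph_chain_Union)
  then obtain G where G: "dominated_extension_graph p V f G"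
    and maximal: "\<And>G'. dominated_extension_graph p V f G' \<Longrightarrow> G \<subseteq> G' \<Longrightarrow> G' = G"
    unfolding A_def by blast
  have "\<exists>a. (x, a) \<in> G" for x
    using dominated_extension_graph_extend[OF p G] maximal by blast
  then show ?thesis
    by (rule dominated_extension_graph_total_imp_linear[OF p G])
qed

section \<open>Slices of locally uniformly convex spaces\<close>

lemma loc_unif_convex_norming_sequence:
  fixes f :: "'a::real_normed_vector \<Rightarrow> real"
  assumes luc: "loc_unif_convex TYPE('a)"
    and f: "linear f" "\<And>x. \<bar>f x\<bar> \<le> norm x" "f v = norm v"
    and u: "\<And>n. norm (u n) = norm v" "(\<lambda>n. f (u n)) \<longlonglongrightarrow> norm v"
  shows "u \<longlonglongrightarrow> v"
proof -
  define q where "q n = 2 * (norm v)\<^sup>2 + 2 * (norm (u n))\<^sup>2 - (norm (v + u n))\<^sup>2" for n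
  define h where "h n = 4 * (norm v)\<^sup>2 - (norm v + f (u n))\<^sup>2" for n
  have q_nonneg: "\<forall>n. 0 \<le> q n"
  proof
    fix n
    have "norm (v + u n) \<le> 2 * norm v" using norm_triangle_ineq[of v "u n"] u(1) by simp
    then have "(norm (v + u n))\<^sup>2 \<le> (2 * norm v)\<^sup>2" by (intro power_mono) auto
    then show "0 \<le> q n" unfolding q_def using u(1) by (simp add: power2_eq_square)
  qed
  have q_le_h: "\<forall>n. q n \<le> h n"
  proof
    fix n
    have "f (v + u n) = norm v + f (u n)"
      using linear_add[OF f(1)] f(3) by simp
    then have "\<bar>norm v + f (u n)\<bar> \<le> norm (v + u n)"
      using f(2)[of "v + u n"] by simp
    then have "\<bar>norm v + f (u n)\<bar>\<^sup>2 \<le> (norm (v + u n))\<^sup>2"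
      by (rule power_mono) simp
    then show "q n \<le> h n" unfolding q_def h_def using u(1) by simp
  qed
  have "h \<longlonglongrightarrow> 4 * (norm v)\<^sup>2 - (norm v + norm v)\<^sup>2"
    unfolding h_def by (intro tendsto_intros u(2))
  then have "h \<longlonglongrightarrow> 0"
    by (simp add: power2_eq_square)
  then have "q \<longlonglongrightarrow> 0"
    by (rule tendsto_sandwich[OF always_eventually[OF q_nonneg] always_eventually[OF q_le_h] tendsto_const])
  then have "(\<lambda>n. norm (v - u n)) \<longlonglongrightarrow> 0"
    unfolding q_def by (rule luc[unfolded loc_unif_convex_def, rule_format])
  then have "(\<lambda>n. norm (u n - v)) \<longlonglongrightarrow> 0"
    by (simp add: norm_minus_commute)
  then show ?thesis
    by (simp add: tendsto_norm_zero_iff LIM_zero_iff)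
qed

lemma loc_unif_convex_slice_small:
  fixes f :: "'a::real_normed_vector \<Rightarrow> real"
  assumes luc: "loc_unif_convex TYPE('a)"
    and f: "linear f" "\<And>x. \<bar>f x\<bar> \<le> norm x" "f v = norm v" and "0 < e"
  shows "\<exists>\<delta>>0. \<forall>u. norm u = norm v \<longrightarrow> (1 - \<delta>) * norm v < f u \<longrightarrow> dist v u < e"
proof (rule ccontr)
  assume "\<not> ?thesis"
  then have "\<forall>n. \<exists>u. norm u = norm v \<and> (1 - inverse (Suc n)) * norm v < f u \<and> \<not> dist v u < e"
    using positive_imp_inverse_positive[of "real (Suc _)"] by auto
  then obtain u where u: "\<forall>n. norm (u n) = norm v \<and> (1 - inverse (Suc n)) * norm v < f (u n)
      \<and> \<not> dist v (u n) < e"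
    by (auto dest: choice)
  have "(\<lambda>n. (1 - inverse (Suc n)) * norm v) \<longlonglongrightarrow> (1 - 0) * norm v"
    by (intro tendsto_intros LIMSEQ_inverse_real_of_nat)
  moreover have "\<forall>n. (1 - inverse (Suc n)) * norm v \<le> f (u n)"
    using u by (auto intro: less_imp_le)
  moreover have "\<forall>n. f (u n) \<le> norm v"
    using f(2) u by (metis abs_le_D1)
  ultimately have "(\<lambda>n. f (u n)) \<longlonglongrightarrow> norm v"
    using tendsto_sandwich[OF always_eventually always_eventually _ tendsto_const] by simp
  then have "u \<longlonglongrightarrow> v"
    using u by (intro loc_unif_convex_norming_sequence[OF luc f]) auto
  then have "eventually (\<lambda>n. dist (u n) v < e) sequentially"
    using \<open>0 < e\<close> by (rule tendstoD)
  then show False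
    using u by (auto simp: dist_commute dest: eventually_happens)
qed

section \<open>Complex normed spaces and the distance to an annihilator\<close>

lemma cnj_sgn_mult_self: "cnj (sgn z) * z = complex_of_real (cmod z)"
proof (cases "z = 0")
  case False
  then show ?thesis
    by (simp add: sgn_div_norm mult.commute[of "cnj z"] complex_norm_square[symmetric]
        power2_eq_square scaleR_conv_of_real field_simps)
qed simp

lemma sublinear_scaled_norm: "0 \<le> C \<Longrightarrow> sublinear (\<lambda>x. C * norm x)"
  unfolding sublinear_def by (auto simp flip: distrib_left intro!: mult_left_mono norm_triangle_ineq)

definition complex_subspace :: "(complex \<Rightarrow> 'a::real_normed_vector \<Rightarrow> 'a) \<Rightarrow> 'a set \<Rightarrow> bool" where
  "complex_subspace smul V \<longleftrightarrow> 0 \<in> V \<and> (\<forall>x\<in>V. \<forall>y\<in>V. x + y \<in> V) \<and> (\<forall>c. \<forall>x\<in>V. smul c x \<in> V)"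

lemma MaxA_iff: "V \<in> MaxA smul \<longleftrightarrow> closed V \<and> complex_subspace smul V"
  unfolding MaxA_def complex_subspace_def by blast

lemma zero_in_cdual: "(\<lambda>_. 0) \<in> cdual smul"
  unfolding cdual_def by (auto intro: exI[of _ 0])

definition dual_cone :: "('a::real_normed_vector \<Rightarrow> complex) \<Rightarrow> real \<Rightarrow> 'a set" where
  "dual_cone \<phi> r = {x. r * norm x < cmod (\<phi> x)}"

context
  fixes smul :: "complex \<Rightarrow> 'a::real_normed_vector \<Rightarrow> 'a"
  assumes cs: "complex_normed_structure smul"
begin

lemma smul_of_real: "smul (complex_of_real r) x = r *\<^sub>R x"
  and smul_add_left: "smul (a + b) x = smul a x + smul b x"
  and smul_add_right: "smul a (x + y) = smul a x + smul a y"
  and smul_mult: "smul (a * b) x = smul a (smul b x)"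
  and norm_smul: "norm (smul a x) = cmod a * norm x"
  using cs unfolding complex_normed_structure_def by blast+

lemma smul_zero_left: "smul 0 x = 0"
  using smul_of_real[of 0] by simp

lemma smul_one: "smul 1 x = x"
  using smul_of_real[of 1] by simp

lemma smul_diff_left: "smul (a - b) x = smul a x - smul b x"
  using smul_add_left[of "a - b" b x] by (simp add: eq_diff_eq)

lemma smul_scaleR: "smul c (r *\<^sub>R x) = r *\<^sub>R smul c x"
  by (metis mult.commute smul_mult smul_of_real)

lemma smul_Complex: "smul (Complex a b) x = a *\<^sub>R x + b *\<^sub>R smul \<i> x"
  unfolding Complex_eq by (simp add: smul_add_left smul_mult smul_of_real smul_scaleR)

lemma complex_subspace_imp_subspace: "complex_subspace smul V \<Longrightarrow> subspace V"
  unfolding complex_subspace_def subspace_def by (metis smul_of_real)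

lemma cdual_bounded_linear:
  assumes "\<phi> \<in> cdual smul" shows "bounded_linear \<phi>"
proof -
  have \<phi>_add: "\<phi> (x + y) = \<phi> x + \<phi> y" and \<phi>_smul: "\<phi> (smul c x) = c * \<phi> x" for x y c
    using assms unfolding cdual_def by blast+
  obtain K where K: "\<And>x. cmod (\<phi> x) \<le> K * norm x"
    using assms unfolding cdual_def by blast
  show ?thesis
  proof (rule bounded_linear_intro[of _ K])
    show "\<phi> (r *\<^sub>R x) = r *\<^sub>R \<phi> x" for r x
      using \<phi>_smul[of "complex_of_real r" x] by (simp add: smul_of_real scaleR_conv_of_real)
    show "norm (\<phi> x) \<le> norm x * K" for x
      using K[of x] by (simp add: mult.commute)
  qed (rule \<phi>_add)
qed

lemma cdual_diff:
  assumes "\<phi> \<in> cdual smul" "\<psi> \<in> cdual smul"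
  shows "(\<lambda>x. \<phi> x - \<psi> x) \<in> cdual smul"
proof -
  obtain K\<^sub>1 K\<^sub>2 where K: "\<And>x. cmod (\<phi> x) \<le> K\<^sub>1 * norm x" "\<And>x. cmod (\<psi> x) \<le> K\<^sub>2 * norm x"
    using assms unfolding cdual_def by blast
  have "cmod (\<phi> x - \<psi> x) \<le> (K\<^sub>1 + K\<^sub>2) * norm x" for x
  proof -
    have "cmod (\<phi> x - \<psi> x) \<le> cmod (\<phi> x) + cmod (\<psi> x)" by (rule norm_triangle_ineq4)
    also have "\<dots> \<le> (K\<^sub>1 + K\<^sub>2) * norm x" using K[of x] by (simp add: distrib_right add_mono)
    finally show ?thesis .
  qed
  moreover have "\<phi> (x + y) - \<psi> (x + y) = (\<phi> x - \<psi> x) + (\<phi> y - \<psi> y)"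
    and "\<phi> (smul c x) - \<psi> (smul c x) = c * (\<phi> x - \<psi> x)" for x y c
    using assms unfolding cdual_def by (simp_all add: algebra_simps)
  ultimately show ?thesis unfolding cdual_def by blast
qed

lemma complexify_real_functional:
  assumes "linear g"
  defines "\<psi> \<equiv> \<lambda>x. Complex (g x) (- g (smul \<i> x))"
  \<comment> \<open>a complex-linear \<open>\<psi>\<close> satisfies \<open>Im (\<psi> x) = - Re (\<psi> (\<i> x))\<close>\<close>
  shows "\<psi> (x + y) = \<psi> x + \<psi> y" and "\<psi> (smul c x) = c * \<psi> x" and "Re (\<psi> x) = g x"
proof -
  have g_Complex: "g (smul (Complex a b) x) = a * g x + b * g (smul \<i> x)" for a b x
    using assms(1) by (simp add: smul_Complex linear_add linear_scale)
  show "\<psi> (x + y) = \<psi> x + \<psi> y"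
    using assms(1) by (simp add: \<psi>_def smul_add_right linear_add complex_eq_iff)
  obtain a b where c: "c = Complex a b" by (metis complex.exhaust)
  have "\<i> * c = Complex (- b) a" unfolding c by (simp add: complex_eq_iff)
  then have "smul \<i> (smul c x) = smul (Complex (- b) a) x" by (metis smul_mult)
  then show "\<psi> (smul c x) = c * \<psi> x"
    unfolding \<psi>_def c using g_Complex by (simp add: complex_eq_iff algebra_simps)
  show "Re (\<psi> x) = g x" by (simp add: \<psi>_def)
qed

lemma cmod_le_of_Re_le:
  assumes \<psi>_smul: "\<And>c x. \<psi> (smul c x) = c * \<psi> x"
    and Re_le: "\<And>x. Re (\<psi> x) \<le> C * norm x" and "0 \<le> C"
  shows "cmod (\<psi> x) \<le> C * norm x"
proof -
  define u where "u = cnj (sgn (\<psi> x))"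
  have "cmod (\<psi> x) = Re (\<psi> (smul u x))"
    by (simp add: u_def \<psi>_smul cnj_sgn_mult_self)
  also have "\<dots> \<le> C * (cmod u * norm x)"
    using Re_le[of "smul u x"] by (simp add: norm_smul)
  also have "\<dots> \<le> C * norm x"
    using \<open>0 \<le> C\<close> by (intro mult_left_mono) (auto simp: u_def norm_sgn mult_le_cancel_right1)
  finally show ?thesis .
qed

theorem Hahn_Banach_complex:
  assumes V: "complex_subspace smul V"
    and \<phi>_add: "\<forall>x\<in>V. \<forall>y\<in>V. \<phi> (x + y) = \<phi> x + \<phi> y"
    and \<phi>_smul: "\<forall>c. \<forall>x\<in>V. \<phi> (smul c x) = c * \<phi> x"
    and \<phi>_bound: "\<forall>x\<in>V. cmod (\<phi> x) \<le> C * norm x" and "0 \<le> C"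
  shows "\<exists>\<psi>\<in>cdual smul. (\<forall>x\<in>V. \<psi> x = \<phi> x) \<and> (\<forall>x. cmod (\<psi> x) \<le> C * norm x)"
proof -
  obtain g where "linear g" and g_V: "\<forall>x\<in>V. g x = Re (\<phi> x)" and g_le: "\<forall>x. g x \<le> C * norm x"
  proof -
    have "\<forall>r. \<forall>x\<in>V. Re (\<phi> (r *\<^sub>R x)) = r * Re (\<phi> x)"
      using \<phi>_smul by (simp add: smul_of_real[symmetric])
    moreover have "\<forall>x\<in>V. Re (\<phi> x) \<le> C * norm x"
      using \<phi>_bound complex_Re_le_cmod order_trans by blast
    ultimately show ?thesis
      using Hahn_Banach_sublinear[OF sublinear_scaled_norm[OF \<open>0 \<le> C\<close>]
          complex_subspace_imp_subspace[OF V], of "\<lambda>x. Re (\<phi> x)"] \<phi>_add that by auto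
  qed
  define \<psi> where "\<psi> x = Complex (g x) (- g (smul \<i> x))" for x
  have \<psi>: "\<psi> (x + y) = \<psi> x + \<psi> y" "\<psi> (smul c x) = c * \<psi> x" "Re (\<psi> x) = g x" for x y c
    unfolding \<psi>_def by (rule complexify_real_functional[OF \<open>linear g\<close>])+
  have \<psi>_bound: "cmod (\<psi> x) \<le> C * norm x" for x
    using cmod_le_of_Re_le[OF \<psi>(2)] \<psi>(3) g_le \<open>0 \<le> C\<close> by auto
  have "\<psi> x = \<phi> x" if "x \<in> V" for x
  proof -
    have "smul \<i> x \<in> V" using V that unfolding complex_subspace_def by blast
    then show ?thesis using that g_V \<phi>_smul by (simp add: \<psi>_def complex_eq_iff)
  qed
  moreover have "\<psi> \<in> cdual smul"
    unfolding cdual_def using \<psi>(1,2) \<psi>_bound by blast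
  ultimately show ?thesis using \<psi>_bound by blast
qed

lemma exists_norming_functional:
  "\<exists>\<phi>\<in>cdual smul. \<phi> v = complex_of_real (norm v) \<and> (\<forall>x. cmod (\<phi> x) \<le> norm x)"
proof (cases "v = 0")
  case True
  then show ?thesis using zero_in_cdual by force
next
  case False
  have coeff_unique: "c = c'" if "smul c v = smul c' v" for c c'
  proof -
    have "norm (smul (c - c') v) = 0" using that by (simp add: smul_diff_left)
    then show ?thesis using False by (simp add: norm_smul)
  qed
  define L where "L = range (\<lambda>c. smul c v)"
  define \<phi>\<^sub>0 where "\<phi>\<^sub>0 x = (THE c. x = smul c v) * complex_of_real (norm v)" for x
  have \<phi>\<^sub>0_L: "\<phi>\<^sub>0 (smul c v) = c * complex_of_real (norm v)" for c
  proof -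
    have "(THE c'. smul c v = smul c' v) = c" using coeff_unique by (intro the_equality) auto
    then show ?thesis by (simp add: \<phi>\<^sub>0_def)
  qed
  obtain \<psi> where \<psi>: "\<psi> \<in> cdual smul" "\<forall>x\<in>L. \<psi> x = \<phi>\<^sub>0 x" "\<forall>x. cmod (\<psi> x) \<le> 1 * norm x"
  proof (rule Hahn_Banach_complex[THEN bexE])
    show "complex_subspace smul L"
      unfolding L_def complex_subspace_def using smul_zero_left[of v]
      by (auto simp: smul_add_left[symmetric] smul_mult[symmetric] intro: range_eqI[of _ _ 0])
    show "\<forall>x\<in>L. \<forall>y\<in>L. \<phi>\<^sub>0 (x + y) = \<phi>\<^sub>0 x + \<phi>\<^sub>0 y"
      unfolding L_def by (auto simp: smul_add_left[symmetric] \<phi>\<^sub>0_L distrib_right)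
    show "\<forall>c. \<forall>x\<in>L. \<phi>\<^sub>0 (smul c x) = c * \<phi>\<^sub>0 x"
      unfolding L_def by (auto simp: smul_mult[symmetric] \<phi>\<^sub>0_L)
    show "\<forall>x\<in>L. cmod (\<phi>\<^sub>0 x) \<le> 1 * norm x"
      unfolding L_def by (auto simp: \<phi>\<^sub>0_L norm_smul norm_mult)
  qed auto
  have "v \<in> L" "\<phi>\<^sub>0 v = complex_of_real (norm v)"
    using \<phi>\<^sub>0_L[of 1] unfolding L_def by (auto simp: smul_one intro: range_eqI[of _ _ 1])
  then have "\<psi> v = complex_of_real (norm v)" using \<psi>(2) by simp
  then show ?thesis using \<psi>(1,3) by auto
qed

lemma dual_dist_annih_lower_bound:
  assumes "\<phi> \<in> cdual smul" "w \<in> W"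
  shows "cmod (\<phi> w) \<le> dual_dist \<phi> (annih smul W) * norm w"
proof (cases "w = 0")
  case True
  then show ?thesis using linear_0[OF bounded_linear.linear[OF cdual_bounded_linear[OF assms(1)]]] by simp
next
  case False
  have "cmod (\<phi> w) / norm w \<le> onorm (\<lambda>x. \<phi> x - \<psi> x)" if "\<psi> \<in> annih smul W" for \<psi>
  proof -
    have "bounded_linear (\<lambda>x. \<phi> x - \<psi> x)"
      using that assms(1) cdual_diff cdual_bounded_linear unfolding annih_def by blast
    from onorm[OF this, of w] show ?thesis
      using that assms(2) False unfolding annih_def by (simp add: divide_le_eq mult.commute)
  qed
  moreover have "(\<lambda>_. 0) \<in> annih smul W" unfolding annih_def using zero_in_cdual by auto
  ultimately have "cmod (\<phi> w) / norm w \<le> dual_dist \<phi> (annih smul W)"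
    unfolding dual_dist_def by (intro cInf_greatest) auto
  then show ?thesis using False by (simp add: divide_le_eq)
qed

lemma dual_dist_annih_upper_bound:
  assumes \<phi>: "\<phi> \<in> cdual smul" and W: "complex_subspace smul W" and "0 \<le> r"
    and bound: "\<forall>w\<in>W. cmod (\<phi> w) \<le> r * norm w"
  shows "dual_dist \<phi> (annih smul W) \<le> r"
proof -
  obtain \<theta> where \<theta>: "\<theta> \<in> cdual smul" "\<forall>w\<in>W. \<theta> w = \<phi> w" "\<forall>x. cmod (\<theta> x) \<le> r * norm x"
    using Hahn_Banach_complex[OF W _ _ bound \<open>0 \<le> r\<close>] \<phi> unfolding cdual_def by auto
  have "(\<lambda>x. \<phi> x - \<theta> x) \<in> annih smul W"
    using cdual_diff[OF \<phi> \<theta>(1)] \<theta>(2) unfolding annih_def by auto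
  then have "onorm (\<lambda>x. \<phi> x - (\<phi> x - \<theta> x)) \<in> {onorm (\<lambda>x. \<phi> x - \<psi> x) | \<psi>. \<psi> \<in> annih smul W}"
    by (intro CollectI exI[of _ "\<lambda>x. \<phi> x - \<theta> x"]) simp
  moreover have "bdd_below {onorm (\<lambda>x. \<phi> x - \<psi> x) | \<psi>. \<psi> \<in> annih smul W}"
    using \<phi> cdual_diff cdual_bounded_linear onorm_pos_le unfolding annih_def bdd_below_def by blast
  ultimately have "dual_dist \<phi> (annih smul W) \<le> onorm (\<lambda>x. \<phi> x - (\<phi> x - \<theta> x))"
    unfolding dual_dist_def by (rule cInf_lower)
  also have "onorm (\<lambda>x. \<phi> x - (\<phi> x - \<theta> x)) \<le> r" using \<theta>(3) \<open>0 \<le> r\<close> by (intro onorm_bound) auto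
  finally show ?thesis .
qed

lemma dual_dist_annih_gt_iff:
  assumes "\<phi> \<in> cdual smul" "complex_subspace smul W" "0 \<le> r"
  shows "r < dual_dist \<phi> (annih smul W) \<longleftrightarrow> W \<inter> dual_cone \<phi> r \<noteq> {}"
proof
  assume "r < dual_dist \<phi> (annih smul W)"
  then show "W \<inter> dual_cone \<phi> r \<noteq> {}"
    using dual_dist_annih_upper_bound[OF assms] unfolding dual_cone_def by force
next
  assume "W \<inter> dual_cone \<phi> r \<noteq> {}"
  then obtain w where "w \<in> W" "r * norm w < cmod (\<phi> w)" unfolding dual_cone_def by blast
  with dual_dist_annih_lower_bound[OF assms(1) this(1)]
  have "r * norm w < dual_dist \<phi> (annih smul W) * norm w" by linarith
  then show "r < dual_dist \<phi> (annih smul W)"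
    by (rule mult_right_less_imp_less) simp
qed

lemma dual_cone_rescale_to_sphere:
  assumes \<phi>: "\<phi> \<in> cdual smul" and w: "w \<in> dual_cone \<phi> r" and "0 \<le> r" "0 < s"
  shows "\<exists>c. norm (smul c w) = s \<and> r * s < Re (\<phi> (smul c w))"
proof -
  have \<phi>w: "r * norm w < cmod (\<phi> w)" using w unfolding dual_cone_def by blast
  moreover have "0 \<le> r * norm w" using \<open>0 \<le> r\<close> by simp
  ultimately have "\<phi> w \<noteq> 0" by auto
  moreover have "\<phi> 0 = 0"
    using linear_0[OF bounded_linear.linear[OF cdual_bounded_linear[OF \<phi>]]] .
  ultimately have "0 < norm w" by auto
  \<comment> \<open>the rotation \<open>cnj (sgn (\<phi> w))\<close> makes the value of \<open>\<phi>\<close> real and positive\<close>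
  define c where "c = complex_of_real (s / norm w) * cnj (sgn (\<phi> w))"
  have "cmod c = s / norm w"
    unfolding c_def using \<open>\<phi> w \<noteq> 0\<close> \<open>0 < s\<close> by (simp add: norm_mult norm_sgn del: of_real_divide)
  then have "norm (smul c w) = s"
    using \<open>0 < norm w\<close> by (simp add: norm_smul)
  moreover have "Re (\<phi> (smul c w)) = s / norm w * cmod (\<phi> w)"
    using \<phi> unfolding cdual_def by (simp add: c_def mult.assoc cnj_sgn_mult_self)
  moreover have "r * s < s / norm w * cmod (\<phi> w)"
  proof -
    have "r < cmod (\<phi> w) / norm w" using \<phi>w \<open>0 < norm w\<close> by (simp add: less_divide_eq)
    then have "r * s < cmod (\<phi> w) / norm w * s"
      using \<open>0 < s\<close> by (intro mult_strict_right_mono)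
    then show ?thesis by (simp add: mult.commute)
  qed
  ultimately show ?thesis by metis
qed

lemma dual_cone_multiples_meet_open:
  assumes luc: "loc_unif_convex TYPE('a)" and U: "open U" "v \<in> U" and "v \<noteq> 0"
  shows "\<exists>\<phi>\<in>cdual smul. \<exists>r>0. v \<in> dual_cone \<phi> r \<and> (\<forall>w\<in>dual_cone \<phi> r. \<exists>c. smul c w \<in> U)"
proof -
  obtain \<phi> where \<phi>: "\<phi> \<in> cdual smul" "\<phi> v = complex_of_real (norm v)" "\<And>x. cmod (\<phi> x) \<le> norm x"
    using exists_norming_functional by blast
  have "linear (\<lambda>x. Re (\<phi> x))"
    using bounded_linear_compose[OF bounded_linear_Re cdual_bounded_linear[OF \<phi>(1)]]
    by (rule bounded_linear.linear)
  moreover have "\<bar>Re (\<phi> x)\<bar> \<le> norm x" for x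
    using abs_Re_le_cmod \<phi>(3) order_trans by blast
  moreover obtain e where "0 < e" "ball v e \<subseteq> U"
    using U open_contains_ball by blast
  ultimately obtain \<delta> where "0 < \<delta>" and slice:
    "\<And>u. norm u = norm v \<Longrightarrow> (1 - \<delta>) * norm v < Re (\<phi> u) \<Longrightarrow> u \<in> U"
    using loc_unif_convex_slice_small[OF luc, of "\<lambda>x. Re (\<phi> x)" v e] \<phi>(2) by fastforce
  define r where "r = max (1 - \<delta>) (1 / 2)"
  have r: "0 < r" "r < 1" "1 - \<delta> \<le> r"
    using \<open>0 < \<delta>\<close> by (auto simp: r_def)
  have "v \<in> dual_cone \<phi> r"
    using r \<open>v \<noteq> 0\<close> \<phi>(2) by (simp add: dual_cone_def)
  moreover have "\<exists>c. smul c w \<in> U" if w: "w \<in> dual_cone \<phi> r" for w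
  proof -
    obtain c where "norm (smul c w) = norm v" "r * norm v < Re (\<phi> (smul c w))"
      using dual_cone_rescale_to_sphere[OF \<phi>(1) w, of "norm v"] r(1) \<open>v \<noteq> 0\<close> by auto
    moreover have "(1 - \<delta>) * norm v \<le> r * norm v"
      using r(3) by (simp add: mult_right_mono)
    ultimately show ?thesis using slice by force
  qed
  ultimately show ?thesis using \<phi>(1) r(1) by blast
qed

lemma open_dual_cone:
  assumes "\<phi> \<in> cdual smul" shows "open (dual_cone \<phi> r)"
proof -
  have "continuous_on UNIV \<phi>"
    by (rule linear_continuous_on[OF cdual_bounded_linear[OF assms]])
  then show ?thesis
    unfolding dual_cone_def by (intro open_Collect_less continuous_intros)
qed

lemma lower_vietoris_refined_by_dual_cone:
  assumes luc: "loc_unif_convex TYPE('a)" and U: "open U" "0 \<notin> U" and "V \<inter> U \<noteq> {}"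
  shows "\<exists>\<phi>\<in>cdual smul. \<exists>r>0. V \<inter> dual_cone \<phi> r \<noteq> {} \<and>
           (\<forall>W\<in>MaxA smul. W \<inter> dual_cone \<phi> r \<noteq> {} \<longrightarrow> W \<inter> U \<noteq> {})"
proof -
  obtain v where "v \<in> V" "v \<in> U" using \<open>V \<inter> U \<noteq> {}\<close> by blast
  then obtain \<phi> r where "\<phi> \<in> cdual smul" "r > 0" "v \<in> dual_cone \<phi> r"
    and multiples: "\<And>w. w \<in> dual_cone \<phi> r \<Longrightarrow> \<exists>c. smul c w \<in> U"
    using dual_cone_multiples_meet_open[OF luc U(1)] U(2) by metis
  moreover have "W \<inter> U \<noteq> {}" if "W \<in> MaxA smul" "w \<in> W" "w \<in> dual_cone \<phi> r" for W w
    using multiples[OF that(3)] that(1,2) unfolding MaxA_def by blast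
  ultimately show ?thesis using \<open>v \<in> V\<close> by blast
qed

end

section \<open>The two topologies\<close>

definition lower_vietoris_subbase :: "(complex \<Rightarrow> 'a::real_normed_vector \<Rightarrow> 'a) \<Rightarrow> 'a set set set" where
  "lower_vietoris_subbase smul = {{V \<in> MaxA smul. V \<inter> U \<noteq> {}} | U. open U}"

definition dual_distance_subbase :: "(complex \<Rightarrow> 'a::real_normed_vector \<Rightarrow> 'a) \<Rightarrow> 'a set set set" where
  "dual_distance_subbase smul =
     {{V \<in> MaxA smul. dual_dist \<phi> (annih smul V) > r} | \<phi> r. \<phi> \<in> cdual smul \<and> r > 0}"

lemma topology_generated_by_eqI:
  assumes "\<And>s. s \<in> S \<Longrightarrow> generate_topology_on T s" and "\<And>t. t \<in> T \<Longrightarrow> generate_topology_on S t"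
  shows "topology_generated_by S = topology_generated_by T"
  unfolding topology_eq openin_topology_generated_by_iff
  using generate_topology_on_coarsest[OF istopology_generate_topology_on] assms by metis

context
  fixes smul :: "complex \<Rightarrow> 'a::real_normed_vector \<Rightarrow> 'a"
  assumes cs: "complex_normed_structure smul"
begin

lemma dual_dist_set_eq:
  assumes "\<phi> \<in> cdual smul" "0 \<le> r"
  shows "{V \<in> MaxA smul. r < dual_dist \<phi> (annih smul V)} = {V \<in> MaxA smul. V \<inter> dual_cone \<phi> r \<noteq> {}}"
  using dual_dist_annih_gt_iff[OF cs assms(1) _ assms(2)] by (auto simp: MaxA_iff)

lemma dual_distance_subbase_subset: "dual_distance_subbase smul \<subseteq> lower_vietoris_subbase smul"
proof
  fix N assume "N \<in> dual_distance_subbase smul"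
  then obtain \<phi> r where "\<phi> \<in> cdual smul" "r > 0"
    and "N = {V \<in> MaxA smul. dual_dist \<phi> (annih smul V) > r}"
    unfolding dual_distance_subbase_def by blast
  then have "N = {V \<in> MaxA smul. V \<inter> dual_cone \<phi> r \<noteq> {}}" and "open (dual_cone \<phi> r)"
    using dual_dist_set_eq open_dual_cone[OF cs] by simp_all
  then show "N \<in> lower_vietoris_subbase smul"
    unfolding lower_vietoris_subbase_def by blast
qed

lemma lower_vietoris_subbase_generated:
  assumes luc: "loc_unif_convex TYPE('a)" and "N \<in> lower_vietoris_subbase smul"
  shows "generate_topology_on (insert (MaxA smul) (dual_distance_subbase smul)) N"
proof -
  obtain U where "open U" and N: "N = {V \<in> MaxA smul. V \<inter> U \<noteq> {}}"
    using assms(2) unfolding lower_vietoris_subbase_def by blast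
  show ?thesis
  proof (cases "0 \<in> U")
    case True
    then have "N = MaxA smul" unfolding N by (auto simp: MaxA_iff complex_subspace_def)
    then show ?thesis by (simp add: generate_topology_on.Basis)
  next
    case False
    have "N \<subseteq> \<Union>{M \<in> dual_distance_subbase smul. M \<subseteq> N}"
    proof
      fix V assume "V \<in> N"
      then have "V \<in> MaxA smul" "V \<inter> U \<noteq> {}" unfolding N by blast+
      then obtain \<phi> r where "\<phi> \<in> cdual smul" "r > 0" "V \<inter> dual_cone \<phi> r \<noteq> {}"
        and "\<forall>W\<in>MaxA smul. W \<inter> dual_cone \<phi> r \<noteq> {} \<longrightarrow> W \<inter> U \<noteq> {}"
        using lower_vietoris_refined_by_dual_cone[OF cs luc \<open>open U\<close> False \<open>V \<inter> U \<noteq> {}\<close>] by auto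
      moreover have "{W \<in> MaxA smul. W \<inter> dual_cone \<phi> r \<noteq> {}} \<in> dual_distance_subbase smul"
      proof -
        have "{W \<in> MaxA smul. r < dual_dist \<phi> (annih smul W)} \<in> dual_distance_subbase smul"
          unfolding dual_distance_subbase_def using \<open>\<phi> \<in> cdual smul\<close> \<open>r > 0\<close> by blast
        then show ?thesis using dual_dist_set_eq[OF \<open>\<phi> \<in> cdual smul\<close>] \<open>r > 0\<close> by simp
      qed
      ultimately show "V \<in> \<Union>{M \<in> dual_distance_subbase smul. M \<subseteq> N}"
        using \<open>V \<in> MaxA smul\<close> unfolding N by blast
    qed
    then have "N = \<Union>{M \<in> dual_distance_subbase smul. M \<subseteq> N}" by blast
    moreover have "generate_topology_on (insert (MaxA smul) (dual_distance_subbase smul))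
        (\<Union>{M \<in> dual_distance_subbase smul. M \<subseteq> N})"
      by (rule generate_topology_on.UN) (auto intro: generate_topology_on.Basis)
    ultimately show ?thesis by simp
  qed
qed

end

theorem lemma7p23:
  fixes smul :: "complex \<Rightarrow> 'a::real_normed_vector \<Rightarrow> 'a"
  assumes "complex_normed_structure smul"
    and "loc_unif_convex TYPE('a)"
  shows "topology_on_generated (MaxA smul) {{V \<in> MaxA smul. V \<inter> U \<noteq> {}} | U. open U}
       = topology_on_generated (MaxA smul)
           {{V \<in> MaxA smul. dual_dist \<phi> (annih smul V) > r} | \<phi> r. \<phi> \<in> cdual smul \<and> r > 0}"
proof -
  have "topology_generated_by (insert (MaxA smul) (lower_vietoris_subbase smul))
      = topology_generated_by (insert (MaxA smul) (dual_distance_subbase smul))"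
  proof (rule topology_generated_by_eqI)
    fix N assume "N \<in> insert (MaxA smul) (lower_vietoris_subbase smul)"
    then show "generate_topology_on (insert (MaxA smul) (dual_distance_subbase smul)) N"
      using lower_vietoris_subbase_generated[OF assms] by (auto intro: generate_topology_on.Basis)
  next
    fix N assume "N \<in> insert (MaxA smul) (dual_distance_subbase smul)"
    then show "generate_topology_on (insert (MaxA smul) (lower_vietoris_subbase smul)) N"
      using dual_distance_subbase_subset[OF assms(1)] by (auto intro: generate_topology_on.Basis)
  qed
  then show ?thesis
    unfolding topology_on_generated_def lower_vietoris_subbase_def dual_distance_subbase_def .
qed

end
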